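(* Let $g:\{\pm1\}^{m_1}\times\{\pm1\}^{m_2}\to\{\pm1\}$ be a gadget with $\hat g(S,T)=0$ whenever $S=\emptyset$ or $T=\emptyset$. Let $\mathcal{C}:(\{\pm1\}^{m_1})^n\times(\{\pm1\}^{m_2})^n\to[-1,1]$ be a randomized two-party protocol and $\mathcal{C}_{\downarrow g}$ its $g$-fiber. Then for every $I\subseteq[n]$, $$\widehat{\mathcal{C}_{\downarrow g}}(I)=\sum_{\substack{S^I,T^I\\ S_i\ne\emptyset,\,T_i\ne\emptyset\ \forall i\in I}}\hat{\mathcal{C}}(S^I,T^I)\prod_{i\in I}\hat g(S_i,T_i).$$
   Context: Fourier coefficients of the gadget: $\hat g(S,T)=\mathbb{E}[g(\mathbf{x},\mathbf{y})\prod_{j\in S}\mathbf{x}_j\prod_{j\in T}\mathbf{y}_j]$ for $S\subseteq[m_1],T\subseteq[m_2]$ and $\mathbf{x},\mathbf{y}$ uniform. A randomized protocol $\mathcal{C}$ is identified with the function $(x,y)\mapsto$ its expected output over internal randomness. Inputs $x\in(\{\pm1\}^{m_1})^n$ consist of blocks $x_1,\dots,x_n\in\{\pm1\}^{m_1}$, similarly for $y$. For tuples $S^{[n]}=(S_i)_{i\in[n]}$ with $S_i\subseteq[m_1]$ and $T^{[n]}=(T_i)_{i\in[n]}$ with $T_i\subseteq[m_2]$, $\hat{\mathcal{C}}(S^{[n]},T^{[n]})=\mathbb{E}[\mathcal{C}(\mathbf{x},\mathbf{y})\prod_i\prod_{j\in S_i}\mathbf{x}_{i,j}\prod_i\prod_{j\in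 T_i}\mathbf{y}_{i,j}]$ for uniform $\mathbf{x},\mathbf{y}$. $S^I,T^I$ denote such tuples with $S_j=T_j=\emptyset$ for all $j\notin I$. The $g$-fiber is $\mathcal{C}_{\downarrow g}(z)=\mathbb{E}[\mathcal{C}(\mathbf{x},\mathbf{y})\mid g(\mathbf{x}_i,\mathbf{y}_i)=z_i\ \forall i]$ for $z\in\{\pm1\}^n$, with $\mathbf{x},\mathbf{y}$ uniform, and $\widehat{\mathcal{C}_{\downarrow g}}(I)=\mathbb{E}_{\mathbf z}[\mathcal{C}_{\downarrow g}(\mathbf z)\prod_{i\in I}\mathbf z_i]$ for uniform $\mathbf z\in\{\pm1\}^n$. *)

theory Defs
  imports Complex_Main "HOL-Library.FuncSet"
begin

definition cube :: "nat \<Rightarrow> (nat \<Rightarrow> real) set" where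
  "cube m = {0..<m} \<rightarrow>\<^sub>E {-1, 1}"

definition blocks :: "nat \<Rightarrow> nat \<Rightarrow> (nat \<Rightarrow> nat \<Rightarrow> real) set" where
  "blocks n m = {0..<n} \<rightarrow>\<^sub>E cube m"

definition avg :: "'a set \<Rightarrow> ('a \<Rightarrow> real) \<Rightarrow> real" where
  "avg A f = (\<Sum>a\<in>A. f a) / real (card A)"

definition ghat :: "nat \<Rightarrow> nat \<Rightarrow> ((nat \<Rightarrow> real) \<Rightarrow> (nat \<Rightarrow> real) \<Rightarrow> real)
    \<Rightarrow> nat set \<Rightarrow> nat set \<Rightarrow> real" where
  "ghat m1 m2 g S T = avg (cube m1 \<times> cube m2)
     (\<lambda>(x, y). g x y * (\<Prod>j\<in>S. x j) * (\<Prod>j\<in>T. y j))"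

definition Chat :: "nat \<Rightarrow> nat \<Rightarrow> nat
    \<Rightarrow> ((nat \<Rightarrow> nat \<Rightarrow> real) \<Rightarrow> (nat \<Rightarrow> nat \<Rightarrow> real) \<Rightarrow> real)
    \<Rightarrow> (nat \<Rightarrow> nat set) \<Rightarrow> (nat \<Rightarrow> nat set) \<Rightarrow> real" where
  "Chat n m1 m2 C SS TT = avg (blocks n m1 \<times> blocks n m2)
     (\<lambda>(x, y). C x y * (\<Prod>i<n. \<Prod>j\<in>SS i. x i j) * (\<Prod>i<n. \<Prod>j\<in>TT i. y i j))"

text \<open>The g-fiber: conditional expectation of C(x,y) given g(x_i,y_i) = z_i for all i,
  with x, y uniform (i.e. the average of C over the conditioning event).\<close>
definition fiber :: "nat \<Rightarrow> nat \<Rightarrow> nat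
    \<Rightarrow> ((nat \<Rightarrow> real) \<Rightarrow> (nat \<Rightarrow> real) \<Rightarrow> real)
    \<Rightarrow> ((nat \<Rightarrow> nat \<Rightarrow> real) \<Rightarrow> (nat \<Rightarrow> nat \<Rightarrow> real) \<Rightarrow> real)
    \<Rightarrow> (nat \<Rightarrow> real) \<Rightarrow> real" where
  "fiber n m1 m2 g C z = avg {(x, y) \<in> blocks n m1 \<times> blocks n m2. \<forall>i<n. g (x i) (y i) = z i}
     (\<lambda>(x, y). C x y)"

definition fiber_hat :: "nat \<Rightarrow> nat \<Rightarrow> nat
    \<Rightarrow> ((nat \<Rightarrow> real) \<Rightarrow> (nat \<Rightarrow> real) \<Rightarrow> real)
    \<Rightarrow> ((nat \<Rightarrow> nat \<Rightarrow> real) \<Rightarrow> (nat \<Rightarrow> nat \<Rightarrow> real) \<Rightarrow> real)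
    \<Rightarrow> nat set \<Rightarrow> real" where
  "fiber_hat n m1 m2 g C I = avg (cube n) (\<lambda>z. fiber n m1 m2 g C z * (\<Prod>i\<in>I. z i))"

definition tuples_nonempty_on :: "nat \<Rightarrow> nat \<Rightarrow> nat set \<Rightarrow> (nat \<Rightarrow> nat set) set" where
  "tuples_nonempty_on n m I =
     PiE {0..<n} (\<lambda>i. if i \<in> I then Pow {0..<m} - {{}} else {{}})"

end

theory Submission
  imports Defs
begin

text \<open>Since g is \<plusminus>1-valued with mean ghat(\<emptyset>,\<emptyset>) = 0, it is balanced, so every event
  g(x_i, y_i) = z_i (i < n) contains the same number of inputs. Averaging C over such an event and
  then over z is therefore averaging over all inputs, and the Fourier coefficient of the fiber at I
  becomes the correlation E[C(x, y) \<Prod>_{i\<in>I} g(x_i, y_i)]. Expanding every factor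
  g(x_i, y_i) into its Fourier series, in which only terms with S_i and T_i nonempty survive,
  and using linearity of expectation gives the formula.\<close>

lemma finite_cube [simp]: "finite (cube m)"
  by (simp add: cube_def finite_PiE)

lemma card_cube: "card (cube m) = 2 ^ m"
  by (simp add: cube_def card_PiE numeral_2_eq_2)

lemma finite_blocks [simp]: "finite (blocks n m)"
  by (simp add: blocks_def finite_PiE)

lemma avg_cong: "(\<And>a. a \<in> A \<Longrightarrow> f a = f' a) \<Longrightarrow> avg A f = avg A f'"
  by (simp add: avg_def)

lemma avg_mult_right: "avg A f * c = avg A (\<lambda>a. f a * c)"
  by (simp add: avg_def sum_distrib_right)

lemma avg_sum: "avg A (\<lambda>a. \<Sum>s\<in>S. f a s) = (\<Sum>s\<in>S. avg A (\<lambda>a. f a s))"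
  by (simp add: avg_def sum.swap[of _ S] sum_divide_distrib)

lemma avg_uniform_fibers:
  assumes A: "finite A" and Z: "finite Z" and F: "F ` A \<subseteq> Z"
    and k: "\<And>z. z \<in> Z \<Longrightarrow> card {a \<in> A. F a = z} = k"
  shows "avg Z (\<lambda>z. avg {a \<in> A. F a = z} f * h z) = avg A (\<lambda>a. f a * h (F a))"
proof -
  have "card A = (\<Sum>z\<in>Z. card {a \<in> A. F a = z})"
    using sum.group[OF A Z F, of "\<lambda>_. 1::nat"] by simp
  then have card_A: "card A = k * card Z"
    using k by simp
  have "(\<Sum>z\<in>Z. avg {a \<in> A. F a = z} f * h z)
      = (\<Sum>z\<in>Z. \<Sum>a\<in>{a \<in> A. F a = z}. f a * h z) / k"
    by (simp add: avg_def k sum_divide_distrib sum_distrib_right)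
  also have "\<dots> = (\<Sum>z\<in>Z. \<Sum>a\<in>{a \<in> A. F a = z}. f a * h (F a)) / k"
    by (intro arg_cong[where f = "\<lambda>s. s / k"] sum.cong) auto
  also have "\<dots> = (\<Sum>a\<in>A. f a * h (F a)) / k"
    unfolding sum.group[OF A Z F] ..
  finally show ?thesis
    by (simp add: avg_def card_A)
qed

lemma sum_characters_cube:
  assumes x: "x \<in> cube m" and x': "x' \<in> cube m"
  shows "(\<Sum>S\<in>Pow {0..<m}. (\<Prod>j\<in>S. x j) * (\<Prod>j\<in>S. x' j)) = (if x = x' then 2 ^ m else 0)"
proof -
  have coord: "x j \<in> {-1, 1}" "x' j \<in> {-1, 1}" if "j < m" for j
    using x x' that by (auto simp: cube_def)
  have "(\<Sum>S\<in>Pow {0..<m}. (\<Prod>j\<in>S. x j) * (\<Prod>j\<in>S. x' j))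
      = (\<Sum>S\<in>Pow {0..<m}. (\<Prod>j\<in>S. x j * x' j) * (\<Prod>j\<in>{0..<m} - S. 1))"
    by (simp add: prod.distrib)
  also have "\<dots> = (\<Prod>j\<in>{0..<m}. x j * x' j + 1)"
    by (simp add: prod_add)
  finally have expand: "(\<Sum>S\<in>Pow {0..<m}. (\<Prod>j\<in>S. x j) * (\<Prod>j\<in>S. x' j))
      = (\<Prod>j\<in>{0..<m}. x j * x' j + 1)" .
  show ?thesis
  proof (cases "x = x'")
    case True
    have "x j * x' j + 1 = 2" if "j < m" for j
      using coord[OF that] True by auto
    then have "(\<Prod>j\<in>{0..<m}. x j * x' j + 1) = (\<Prod>j\<in>{0..<m}. 2)"
      by (intro prod.cong) auto
    then show ?thesis
      using expand True by simp
  next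
    case False
    then obtain j where j: "x j \<noteq> x' j"
      by auto
    have "j < m"
    proof (rule ccontr)
      assume "\<not> j < m"
      then have "x j = undefined" "x' j = undefined"
        using PiE_arb[OF x[unfolded cube_def]] PiE_arb[OF x'[unfolded cube_def]] by simp_all
      with j show False
        by simp
    qed
    with j coord have "x j * x' j + 1 = 0"
      by fastforce
    with \<open>j < m\<close> have "(\<Prod>j\<in>{0..<m}. x j * x' j + 1) = 0"
      by (intro prod_zero) auto
    then show ?thesis
      using expand False by simp
  qed
qed

lemma fourier_expansion:
  assumes x: "x \<in> cube m1" and y: "y \<in> cube m2"
  shows "g x y = (\<Sum>S\<in>Pow {0..<m1}. \<Sum>T\<in>Pow {0..<m2}.
                    ghat m1 m2 g S T * (\<Prod>j\<in>S. x j) * (\<Prod>j\<in>T. y j))"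
proof -
  let ?P = "cube m1 \<times> cube m2"
  have "(\<Sum>S\<in>Pow {0..<m1}. \<Sum>T\<in>Pow {0..<m2}. ghat m1 m2 g S T * (\<Prod>j\<in>S. x j) * (\<Prod>j\<in>T. y j))
      = avg ?P (\<lambda>p. \<Sum>S\<in>Pow {0..<m1}. \<Sum>T\<in>Pow {0..<m2}.
          g (fst p) (snd p) * (\<Prod>j\<in>S. fst p j) * (\<Prod>j\<in>T. snd p j) * (\<Prod>j\<in>S. x j) * (\<Prod>j\<in>T. y j))"
    by (simp only: ghat_def avg_mult_right avg_sum case_prod_beta)
  also have "\<dots> = avg ?P (\<lambda>p. g (fst p) (snd p)
      * (\<Sum>S\<in>Pow {0..<m1}. (\<Prod>j\<in>S. fst p j) * (\<Prod>j\<in>S. x j))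
      * (\<Sum>T\<in>Pow {0..<m2}. (\<Prod>j\<in>T. snd p j) * (\<Prod>j\<in>T. y j)))"
    by (simp add: sum_product sum_distrib_left mult_ac)
  also have "\<dots> = avg ?P (\<lambda>p. if p = (x, y) then g x y * 2 ^ m1 * 2 ^ m2 else 0)"
  proof (rule avg_cong)
    fix p
    assume "p \<in> ?P"
    then show "g (fst p) (snd p)
        * (\<Sum>S\<in>Pow {0..<m1}. (\<Prod>j\<in>S. fst p j) * (\<Prod>j\<in>S. x j))
        * (\<Sum>T\<in>Pow {0..<m2}. (\<Prod>j\<in>T. snd p j) * (\<Prod>j\<in>T. y j))
      = (if p = (x, y) then g x y * 2 ^ m1 * 2 ^ m2 else 0)"
      by (cases p) (simp add: sum_characters_cube x y)
  qed
  also have "\<dots> = g x y"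
    using x y by (simp add: avg_def card_cartesian_product card_cube)
  finally show ?thesis ..
qed

lemma fourier_expansion_nonempty:
  assumes ghat_empty: "\<And>S T. S \<subseteq> {0..<m1} \<Longrightarrow> T \<subseteq> {0..<m2} \<Longrightarrow> S = {} \<or> T = {}
                          \<Longrightarrow> ghat m1 m2 g S T = 0"
    and x: "x \<in> cube m1" and y: "y \<in> cube m2"
  shows "g x y = (\<Sum>S\<in>Pow {0..<m1} - {{}}. \<Sum>T\<in>Pow {0..<m2} - {{}}.
                    ghat m1 m2 g S T * (\<Prod>j\<in>S. x j) * (\<Prod>j\<in>T. y j))"
proof -
  have "g x y = (\<Sum>S\<in>Pow {0..<m1}. \<Sum>T\<in>Pow {0..<m2}.
                   ghat m1 m2 g S T * (\<Prod>j\<in>S. x j) * (\<Prod>j\<in>T. y j))"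
    using x y by (rule fourier_expansion)
  also have "\<dots> = (\<Sum>S\<in>Pow {0..<m1} - {{}}. \<Sum>T\<in>Pow {0..<m2}.
                   ghat m1 m2 g S T * (\<Prod>j\<in>S. x j) * (\<Prod>j\<in>T. y j))"
    by (rule sum.mono_neutral_right) (auto simp: ghat_empty)
  also have "\<dots> = (\<Sum>S\<in>Pow {0..<m1} - {{}}. \<Sum>T\<in>Pow {0..<m2} - {{}}.
                   ghat m1 m2 g S T * (\<Prod>j\<in>S. x j) * (\<Prod>j\<in>T. y j))"
    by (intro sum.cong refl sum.mono_neutral_right) (auto simp: ghat_empty)
  finally show ?thesis .
qed

lemma card_level_set_of_sum_zero:
  fixes f :: "'a \<Rightarrow> real"
  assumes A: "finite A" and f: "\<And>a. a \<in> A \<Longrightarrow> f a \<in> {-1, 1}"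
    and sum_zero: "(\<Sum>a\<in>A. f a) = 0" and w: "w \<in> {-1, 1}"
  shows "2 * card {a \<in> A. f a = w} = card A"
proof -
  let ?pos = "{a \<in> A. f a = 1}" and ?neg = "{a \<in> A. f a = -1}"
  have split: "A = ?pos \<union> ?neg" and disjoint: "?pos \<inter> ?neg = {}"
    using f by auto
  have "0 = (\<Sum>a\<in>?pos. f a) + (\<Sum>a\<in>?neg. f a)"
    using A split disjoint sum_zero sum.union_disjoint[of ?pos ?neg f] by simp
  then have "card ?pos = card ?neg"
    by simp
  moreover have "card A = card ?pos + card ?neg"
    using A split disjoint card_Un_disjoint[of ?pos ?neg] by simp
  ultimately show ?thesis
    using w by auto
qed

lemma card_gadget_level_set:
  assumes g_pm1: "\<And>x y. x \<in> cube m1 \<Longrightarrow> y \<in> cube m2 \<Longrightarrow> g x y \<in> {-1, 1}"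
    and ghat_empty: "ghat m1 m2 g {} {} = 0" and w: "w \<in> {-1, 1}"
  shows "2 * card {(x, y) \<in> cube m1 \<times> cube m2. g x y = w} = 2 ^ m1 * 2 ^ m2"
proof -
  let ?P = "cube m1 \<times> cube m2"
  have "card ?P \<noteq> 0"
    by (simp add: card_cartesian_product card_cube)
  with ghat_empty have "(\<Sum>p\<in>?P. case_prod g p) = 0"
    by (simp add: ghat_def avg_def)
  then have "2 * card {p \<in> ?P. case_prod g p = w} = card ?P"
    using g_pm1 w by (intro card_level_set_of_sum_zero) auto
  moreover have "{(x, y) \<in> ?P. g x y = w} = {p \<in> ?P. case_prod g p = w}"
    by auto
  ultimately show ?thesis
    by (simp add: card_cartesian_product card_cube)
qed

lemma card_fiber_event:
  "card {(x, y) \<in> blocks n m1 \<times> blocks n m2. \<forall>i<n. g (x i) (y i) = z i}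
     = (\<Prod>i<n. card {(u, v) \<in> cube m1 \<times> cube m2. g u v = z i})"
proof -
  let ?zip = "\<lambda>(x, y). \<lambda>i\<in>{0..<n}. (x i, y i)"
  let ?unzip = "\<lambda>q. (\<lambda>i\<in>{0..<n}. fst (q i), \<lambda>i\<in>{0..<n}. snd (q i))"
  have "bij_betw ?zip {(x, y) \<in> blocks n m1 \<times> blocks n m2. \<forall>i<n. g (x i) (y i) = z i}
                     (PiE {0..<n} (\<lambda>i. {(u, v) \<in> cube m1 \<times> cube m2. g u v = z i}))"
  proof (rule bij_betw_byWitness[where f' = ?unzip])
    show "\<forall>p\<in>{(x, y) \<in> blocks n m1 \<times> blocks n m2. \<forall>i<n. g (x i) (y i) = z i}. ?unzip (?zip p) = p"
      by (auto simp: blocks_def fun_eq_iff PiE_def extensional_def)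
    show "\<forall>q\<in>PiE {0..<n} (\<lambda>i. {(u, v) \<in> cube m1 \<times> cube m2. g u v = z i}). ?zip (?unzip q) = q"
      by (auto simp: fun_eq_iff PiE_def extensional_def)
    show "?zip ` {(x, y) \<in> blocks n m1 \<times> blocks n m2. \<forall>i<n. g (x i) (y i) = z i}
        \<subseteq> PiE {0..<n} (\<lambda>i. {(u, v) \<in> cube m1 \<times> cube m2. g u v = z i})"
      by (auto simp: blocks_def PiE_iff)
    show "?unzip ` PiE {0..<n} (\<lambda>i. {(u, v) \<in> cube m1 \<times> cube m2. g u v = z i})
        \<subseteq> {(x, y) \<in> blocks n m1 \<times> blocks n m2. \<forall>i<n. g (x i) (y i) = z i}"
      by (auto simp: blocks_def PiE_iff case_prod_beta)
  qed
  then show ?thesis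
    by (simp add: bij_betw_same_card card_PiE atLeast0LessThan)
qed

lemma prod_sum_tuples_nonempty_on:
  fixes f :: "nat \<Rightarrow> nat set \<Rightarrow> nat set \<Rightarrow> 'a::comm_semiring_1"
  assumes I: "I \<subseteq> {0..<n}"
  shows "(\<Prod>i\<in>I. \<Sum>S\<in>Pow {0..<m1} - {{}}. \<Sum>T\<in>Pow {0..<m2} - {{}}. f i S T)
    = (\<Sum>SS\<in>tuples_nonempty_on n m1 I. \<Sum>TT\<in>tuples_nonempty_on n m2 I. \<Prod>i\<in>I. f i (SS i) (TT i))"
proof -
  let ?A = "\<lambda>m i. if i \<in> I then Pow {0..<m} - {{}} else {{}}"
  define F where "F i S T = (if i \<in> I then f i S T else 1)" for i S T
  have "(\<Prod>i\<in>I. \<Sum>S\<in>Pow {0..<m1} - {{}}. \<Sum>T\<in>Pow {0..<m2} - {{}}. f i S T)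
      = (\<Prod>i\<in>I. \<Sum>S\<in>?A m1 i. \<Sum>T\<in>?A m2 i. F i S T)"
    by (intro prod.cong refl) (simp add: F_def)
  also have "\<dots> = (\<Prod>i\<in>{0..<n}. \<Sum>S\<in>?A m1 i. \<Sum>T\<in>?A m2 i. F i S T)"
    using I by (intro prod.mono_neutral_left) (auto simp: F_def)
  also have "\<dots> = (\<Sum>SS\<in>PiE {0..<n} (?A m1). \<Prod>i\<in>{0..<n}. \<Sum>T\<in>?A m2 i. F i (SS i) T)"
    by (rule prod_sum_PiE) auto
  also have "\<dots> = (\<Sum>SS\<in>PiE {0..<n} (?A m1). \<Sum>TT\<in>PiE {0..<n} (?A m2). \<Prod>i\<in>{0..<n}. F i (SS i) (TT i))"
    by (intro sum.cong refl prod_sum_PiE) auto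
  also have "\<dots> = (\<Sum>SS\<in>tuples_nonempty_on n m1 I. \<Sum>TT\<in>tuples_nonempty_on n m2 I. \<Prod>i\<in>I. F i (SS i) (TT i))"
    unfolding tuples_nonempty_on_def
    using I by (intro sum.cong refl prod.mono_neutral_right) (auto simp: F_def PiE_iff)
  also have "\<dots> = (\<Sum>SS\<in>tuples_nonempty_on n m1 I. \<Sum>TT\<in>tuples_nonempty_on n m2 I. \<Prod>i\<in>I. f i (SS i) (TT i))"
    by (simp add: F_def)
  finally show ?thesis .
qed

lemma prod_tuple_nonempty_on_eq:
  assumes SS: "SS \<in> tuples_nonempty_on n m I" and I: "I \<subseteq> {0..<n}" and h: "\<And>i. h i {} = 1"
  shows "(\<Prod>i<n. h i (SS i)) = (\<Prod>i\<in>I. h i (SS i))"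
proof (rule prod.mono_neutral_right)
  show "\<forall>i\<in>{..<n} - I. h i (SS i) = 1"
  proof
    fix i
    assume i: "i \<in> {..<n} - I"
    then have "SS i \<in> {{}}"
      using PiE_mem[OF SS[unfolded tuples_nonempty_on_def], of i] by simp
    then show "h i (SS i) = 1"
      using h by simp
  qed
qed (use I in auto)

lemma prod_gadget_fourier_expansion:
  assumes ghat_empty: "\<And>S T. S \<subseteq> {0..<m1} \<Longrightarrow> T \<subseteq> {0..<m2} \<Longrightarrow> S = {} \<or> T = {}
                          \<Longrightarrow> ghat m1 m2 g S T = 0"
    and x: "x \<in> blocks n m1" and y: "y \<in> blocks n m2" and I: "I \<subseteq> {0..<n}"
  shows "(\<Prod>i\<in>I. g (x i) (y i))
    = (\<Sum>SS\<in>tuples_nonempty_on n m1 I. \<Sum>TT\<in>tuples_nonempty_on n m2 I.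
        (\<Prod>i<n. \<Prod>j\<in>SS i. x i j) * (\<Prod>i<n. \<Prod>j\<in>TT i. y i j) * (\<Prod>i\<in>I. ghat m1 m2 g (SS i) (TT i)))"
proof -
  have "(\<Prod>i\<in>I. g (x i) (y i))
      = (\<Prod>i\<in>I. \<Sum>S\<in>Pow {0..<m1} - {{}}. \<Sum>T\<in>Pow {0..<m2} - {{}}.
          ghat m1 m2 g S T * (\<Prod>j\<in>S. x i j) * (\<Prod>j\<in>T. y i j))"
    using x y I by (intro prod.cong refl fourier_expansion_nonempty[OF ghat_empty]) (auto simp: blocks_def)
  also have "\<dots> = (\<Sum>SS\<in>tuples_nonempty_on n m1 I. \<Sum>TT\<in>tuples_nonempty_on n m2 I.
      \<Prod>i\<in>I. ghat m1 m2 g (SS i) (TT i) * (\<Prod>j\<in>SS i. x i j) * (\<Prod>j\<in>TT i. y i j))"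
    using I by (rule prod_sum_tuples_nonempty_on)
  also have "\<dots> = (\<Sum>SS\<in>tuples_nonempty_on n m1 I. \<Sum>TT\<in>tuples_nonempty_on n m2 I.
        (\<Prod>i<n. \<Prod>j\<in>SS i. x i j) * (\<Prod>i<n. \<Prod>j\<in>TT i. y i j) * (\<Prod>i\<in>I. ghat m1 m2 g (SS i) (TT i)))"
  proof (intro sum.cong refl)
    fix SS TT
    assume "SS \<in> tuples_nonempty_on n m1 I" and "TT \<in> tuples_nonempty_on n m2 I"
    with I have "(\<Prod>i<n. \<Prod>j\<in>SS i. x i j) = (\<Prod>i\<in>I. \<Prod>j\<in>SS i. x i j)"
        and "(\<Prod>i<n. \<Prod>j\<in>TT i. y i j) = (\<Prod>i\<in>I. \<Prod>j\<in>TT i. y i j)"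
      by (simp_all add: prod_tuple_nonempty_on_eq[where h = "\<lambda>i S. \<Prod>j\<in>S. x i j"]
                        prod_tuple_nonempty_on_eq[where h = "\<lambda>i S. \<Prod>j\<in>S. y i j"])
    then show "(\<Prod>i\<in>I. ghat m1 m2 g (SS i) (TT i) * (\<Prod>j\<in>SS i. x i j) * (\<Prod>j\<in>TT i. y i j))
      = (\<Prod>i<n. \<Prod>j\<in>SS i. x i j) * (\<Prod>i<n. \<Prod>j\<in>TT i. y i j) * (\<Prod>i\<in>I. ghat m1 m2 g (SS i) (TT i))"
      by (simp add: prod.distrib mult_ac)
  qed
  finally show ?thesis .
qed

lemma card_fiber_event_balanced:
  assumes g_pm1: "\<And>x y. x \<in> cube m1 \<Longrightarrow> y \<in> cube m2 \<Longrightarrow> g x y \<in> {-1, 1}"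
    and ghat_empty: "ghat m1 m2 g {} {} = 0" and z: "z \<in> cube n"
  shows "card {(x, y) \<in> blocks n m1 \<times> blocks n m2. \<forall>i<n. g (x i) (y i) = z i}
    = card {(u, v) \<in> cube m1 \<times> cube m2. g u v = 1} ^ n"
proof -
  have level: "card {(u, v) \<in> cube m1 \<times> cube m2. g u v = w} = card {(u, v) \<in> cube m1 \<times> cube m2. g u v = 1}"
    if "w \<in> {-1, 1}" for w
    using card_gadget_level_set[OF g_pm1 ghat_empty that] card_gadget_level_set[OF g_pm1 ghat_empty, of 1]
    by simp
  have z_range: "z i \<in> {-1, 1}" if "i < n" for i
    using z that by (auto simp: cube_def)
  have "card {(x, y) \<in> blocks n m1 \<times> blocks n m2. \<forall>i<n. g (x i) (y i) = z i}
      = (\<Prod>i<n. card {(u, v) \<in> cube m1 \<times> cube m2. g u v = z i})"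
    by (rule card_fiber_event)
  also have "\<dots> = (\<Prod>i<n. card {(u, v) \<in> cube m1 \<times> cube m2. g u v = 1})"
    by (intro prod.cong refl level z_range) simp
  finally show ?thesis
    by simp
qed

lemma fiber_hat_eq_avg_prod_gadget:
  assumes g_pm1: "\<And>x y. x \<in> cube m1 \<Longrightarrow> y \<in> cube m2 \<Longrightarrow> g x y \<in> {-1, 1}"
    and ghat_empty: "ghat m1 m2 g {} {} = 0" and I: "I \<subseteq> {0..<n}"
  shows "fiber_hat n m1 m2 g C I
    = avg (blocks n m1 \<times> blocks n m2) (\<lambda>(x, y). C x y * (\<Prod>i\<in>I. g (x i) (y i)))"
proof -
  let ?B = "blocks n m1 \<times> blocks n m2"
  define pattern :: "(nat \<Rightarrow> nat \<Rightarrow> real) \<times> (nat \<Rightarrow> nat \<Rightarrow> real) \<Rightarrow> nat \<Rightarrow> real"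
    where "pattern p = (\<lambda>i\<in>{0..<n}. g (fst p i) (snd p i))" for p
  have "g (fst p i) (snd p i) \<in> {-1, 1}" if "p \<in> ?B" and "i < n" for p i
    using that by (intro g_pm1) (auto simp: blocks_def)
  then have pattern_cube: "pattern ` ?B \<subseteq> cube n"
    by (simp add: image_subset_iff pattern_def cube_def restrict_PiE_iff)
  have event: "{(x, y) \<in> ?B. \<forall>i<n. g (x i) (y i) = z i} = {p \<in> ?B. pattern p = z}"
    if "z \<in> cube n" for z
    using that by (auto simp: pattern_def cube_def PiE_iff fun_eq_iff extensional_def)
  have "fiber_hat n m1 m2 g C I
      = avg (cube n) (\<lambda>z. avg {p \<in> ?B. pattern p = z} (case_prod C) * (\<Prod>i\<in>I. z i))"
    unfolding fiber_hat_def fiber_def by (intro avg_cong) (simp only: event)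
  also have "\<dots> = avg ?B (\<lambda>p. case_prod C p * (\<Prod>i\<in>I. pattern p i))"
  proof (rule avg_uniform_fibers)
    show "card {p \<in> ?B. pattern p = z} = card {(u, v) \<in> cube m1 \<times> cube m2. g u v = 1} ^ n"
      if "z \<in> cube n" for z
      unfolding event[OF that, symmetric] using g_pm1 ghat_empty that by (rule card_fiber_event_balanced)
  qed (use pattern_cube in simp_all)
  also have "\<dots> = avg ?B (\<lambda>(x, y). C x y * (\<Prod>i\<in>I. g (x i) (y i)))"
  proof -
    have "(\<Prod>i\<in>I. pattern p i) = (\<Prod>i\<in>I. g (fst p i) (snd p i))" for p
      using I by (intro prod.cong) (auto simp: pattern_def)
    then show ?thesis
      by (simp add: split_def)
  qed
  finally show ?thesis .
qed

theorem fact7p4: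
  fixes n m1 m2 :: nat
    and g :: "(nat \<Rightarrow> real) \<Rightarrow> (nat \<Rightarrow> real) \<Rightarrow> real"
    and C :: "(nat \<Rightarrow> nat \<Rightarrow> real) \<Rightarrow> (nat \<Rightarrow> nat \<Rightarrow> real) \<Rightarrow> real"
    and I :: "nat set"
  assumes g_pm1: "\<And>x y. x \<in> cube m1 \<Longrightarrow> y \<in> cube m2 \<Longrightarrow> g x y \<in> {-1, 1}"
    and g_hat0: "\<And>S T. S \<subseteq> {0..<m1} \<Longrightarrow> T \<subseteq> {0..<m2} \<Longrightarrow> S = {} \<or> T = {}
                   \<Longrightarrow> ghat m1 m2 g S T = 0"
    and C_bounded: "\<And>x y. x \<in> blocks n m1 \<Longrightarrow> y \<in> blocks n m2 \<Longrightarrow> C x y \<in> {-1..1}"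
    and I_sub: "I \<subseteq> {0..<n}"
  shows "fiber_hat n m1 m2 g C I =
    (\<Sum>SS\<in>tuples_nonempty_on n m1 I. \<Sum>TT\<in>tuples_nonempty_on n m2 I.
        Chat n m1 m2 C SS TT * (\<Prod>i\<in>I. ghat m1 m2 g (SS i) (TT i)))"
proof -
  let ?B = "blocks n m1 \<times> blocks n m2"
  have "fiber_hat n m1 m2 g C I = avg ?B (\<lambda>(x, y). C x y * (\<Prod>i\<in>I. g (x i) (y i)))"
    using g_pm1 g_hat0 I_sub by (intro fiber_hat_eq_avg_prod_gadget) simp_all
  also have "\<dots> = avg ?B (\<lambda>p. \<Sum>SS\<in>tuples_nonempty_on n m1 I. \<Sum>TT\<in>tuples_nonempty_on n m2 I.
      (case p of (x, y) \<Rightarrow> C x y * (\<Prod>i<n. \<Prod>j\<in>SS i. x i j) * (\<Prod>i<n. \<Prod>j\<in>TT i. y i j))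
      * (\<Prod>i\<in>I. ghat m1 m2 g (SS i) (TT i)))"
    by (intro avg_cong)
      (clarsimp simp: prod_gadget_fourier_expansion[OF g_hat0 _ _ I_sub] sum_distrib_left mult_ac)
  also have "\<dots> = (\<Sum>SS\<in>tuples_nonempty_on n m1 I. \<Sum>TT\<in>tuples_nonempty_on n m2 I.
        Chat n m1 m2 C SS TT * (\<Prod>i\<in>I. ghat m1 m2 g (SS i) (TT i)))"
    by (simp only: avg_sum avg_mult_right Chat_def)
  finally show ?thesis .
qed

end
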